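(* Let $f:\mathbb{R}^n\to\mathbb{R}$ be a polynomial of degree at most $4$, let $\mu_f$ be its Steklov function, and let $C:=\sum_{i=1}^n \nabla^2 f_{ii}$ (a constant symmetric $n\times n$ matrix, $f_{ii}=\partial^2 f/\partial x_i^2$). Assume $C$ is positive semidefinite and $C\neq 0$. Let $\lambda_1(C)\ge\cdots\ge\lambda_n(C)$ be its eigenvalues, with an orthonormal basis of eigenvectors $v_1,\ldots,v_n$ ($Cv_i=\lambda_i(C)v_i$), and let $r:=\dim N(C)^\perp$. Fix $L>0$, and for $t_0>0$ let $T:=B[0,L]\times(t_0,+\infty)$, where $B[0,L]=\{x\in\mathbb{R}^n:\|x\|\le L\}$. (a) Assume $\lambda_n(C)=0$ (so $r<n$ and $N(C)=\mathrm{span}[v_{r+1},\ldots,v_n]$). Define $\varphi_{\mathcal N}:S_{n-r}\times\mathbb{R}^n\to\mathbb{R}$, with $\alpha=(\alpha_{r+1},\ldots,\alpha_n)$, by \[ \varphi_{\mathcal N}(\alpha,x)=\sum_{i,j=r+1}^n \alpha_i\alpha_j\, v_i^T\nabla^2 f(x)\, v_j . \] Consider the statements: (i) $\varphi_{\mathcal N}(\alpha,x)>0$ for every $(\alpha,x)\in S_{n-r}\times B[0,L]$; (ii) there exists $t_0>0$ such that $\mu_f$ is convex over $T$ (i.e., $\nabla_{xx}\mu_f(x,t)\succeq 0$ for all $(x,t)\in T$, equivalently $\mu_f(\cdot,t)$ is convex on $B[0,L]$ for every $t>t_0$); (iii) $\varphi_{\mathcal N}(\alpha,x)\ge 0$ for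 every $(\alpha,x)\in S_{n-r}\times B[0,L]$. Then (i) implies (ii), and (ii) implies (iii). (b) Assume $\lambda_n(C)>0$. Then there exists $t_0>0$ such that $\mu_f$ is convex over $T=B[0,L]\times(t_0,+\infty)$.
   Context: The Steklov function of a continuous $f:\mathbb{R}^n\to\mathbb{R}$ is $\mu_f(x,t)=\frac{1}{(2t)^n}\int_{x_n-t}^{x_n+t}\cdots\int_{x_1-t}^{x_1+t} f(\tau)\,d\tau_1\cdots d\tau_n$ for $x\in\mathbb{R}^n$, $t>0$; $\nabla_{xx}\mu_f$ denotes its Hessian with respect to $x$. $\|\cdot\|$ is the Euclidean norm, $S_p=\{\alpha\in\mathbb{R}^p:\|\alpha\|=1\}$ is the unit sphere in $\mathbb{R}^p$, and $N(C)$ is the null space of $C$. *)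

theory Defs
  imports "HOL-Analysis.Analysis"
begin

definition poly_fun_deg_le :: "nat \<Rightarrow> (real^'n \<Rightarrow> real) \<Rightarrow> bool" where
  "poly_fun_deg_le d f \<longleftrightarrow>
     (\<exists>E c. finite E \<and> (\<forall>a\<in>E. sum a UNIV \<le> d) \<and>
        f = (\<lambda>x. \<Sum>a\<in>E. c a * (\<Prod>i\<in>UNIV. (x $ i) ^ a i)))"

definition pderiv_i :: "'n \<Rightarrow> (real^'n \<Rightarrow> real) \<Rightarrow> real^'n \<Rightarrow> real" where
  "pderiv_i i g x = deriv (\<lambda>s. g (x + s *\<^sub>R axis i 1)) 0"

definition hess :: "(real^'n \<Rightarrow> real) \<Rightarrow> real^'n \<Rightarrow> real^'n^'n" where
  "hess g x = (\<chi> i j. pderiv_i i (pderiv_i j g) x)"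

definition psd :: "real^'n^'n \<Rightarrow> bool" where
  "psd A \<longleftrightarrow> (\<forall>v. 0 \<le> v \<bullet> (A *v v))"

definition steklov :: "(real^'n \<Rightarrow> real) \<Rightarrow> real^'n \<Rightarrow> real \<Rightarrow> real" where
  "steklov f x t = integral (cbox (x - (\<chi> i. t)) (x + (\<chi> i. t))) f / (2 * t) ^ CARD('n)"

definition null_space :: "real^'n^'n \<Rightarrow> (real^'n) set" where
  "null_space A = {x. A *v x = 0}"

end

theory Submission
  imports Defs
begin

text \<open>
  The mean of s^k over [y - t, y + t] is y^k + (t^2/6) k (k - 1) y^(k - 2), plus t^4/5 when k = 4.
  The Steklov box is a product of such intervals, so for a monomial of degree at most four the
  Steklov function is a product of these one-dimensional means; multiplying out, every term that
  contains two corrections, or the t^4 correction, is constant. Hence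
  mu_f(., t) = f + (t^2/6) Laplace(f) + const and Hess mu_f(., t) = Hess f + (t^2/6) C.

  Write w = u + z with z in N(C), so that w' C w >= lambda_r |u|^2. On the compact ball
  |a' Hess f b| <= M |a| |b|, and if Hess f is positive definite on N(C) then compactness of the unit
  sphere of N(C) gives a uniform d > 0 with z' Hess f z >= d |z|^2. Then
  w' Hess mu_f w >= ((t^2/6) lambda_r - M) |u|^2 - 2 M |u| |z| + d |z|^2 >= 0 as soon as
  (t^2/6) lambda_r >= M + M^2/d. Conversely, Hess mu_f and Hess f agree on N(C). If lambda_n > 0,
  then N(C) = 0 and the positivity hypothesis holds vacuously.
\<close>

section \<open>Integrals of product functions over boxes\<close>

lemma integral_lborel_prod:
  fixes f :: "'a::euclidean_space \<Rightarrow> real \<Rightarrow> real"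
  assumes "\<And>b. b \<in> Basis \<Longrightarrow> integrable lborel (f b)"
  shows "(\<integral>x. (\<Prod>b\<in>Basis. f b (x \<bullet> b)) \<partial>lborel) = (\<Prod>b\<in>Basis. \<integral>s. f b s \<partial>lborel)"
proof -
  interpret product_sigma_finite "\<lambda>_::'a. lborel :: real measure" ..
  have [measurable]: "b \<in> Basis \<Longrightarrow> f b \<in> borel_measurable borel" for b
    using assms by auto
  show ?thesis
    by (subst lborel_eq) (simp add: integral_distr product_integral_prod assms cong: prod.cong)
qed

lemma integral_cbox_eq_lborel:
  fixes h :: "'a::euclidean_space \<Rightarrow> real"
  assumes "continuous_on (cbox l u) h"
  shows "integral (cbox l u) h = (\<integral>x. indicator (cbox l u) x * h x \<partial>lborel)"
  using set_borel_integral_eq_integral(2)[of "cbox l u" h] borel_integrable_compact[OF compact_cbox assms]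
  by (simp add: set_integrable_def set_lebesgue_integral_def)

lemma integral_cbox_prod_Basis:
  fixes g :: "'a::euclidean_space \<Rightarrow> real \<Rightarrow> real"
  assumes cont: "\<And>b. b \<in> Basis \<Longrightarrow> continuous_on UNIV (g b)"
  shows "integral (cbox l u) (\<lambda>x. \<Prod>b\<in>Basis. g b (x \<bullet> b)) = (\<Prod>b\<in>Basis. integral {l \<bullet> b..u \<bullet> b} (g b))"
proof -
  have cont_Icc: "continuous_on {l \<bullet> b..u \<bullet> b} (g b)" if "b \<in> Basis" for b
    using cont[OF that] by (rule continuous_on_subset) simp
  have "continuous_on (cbox l u) (\<lambda>x. \<Prod>b\<in>Basis. g b (x \<bullet> b))"
    by (intro continuous_intros continuous_on_compose2[OF cont]) auto
  moreover have "indicator (cbox l u) x * (\<Prod>b\<in>Basis. g b (x \<bullet> b))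
      = (\<Prod>b\<in>Basis. indicator {l \<bullet> b..u \<bullet> b} (x \<bullet> b) * g b (x \<bullet> b))" for x
    by (auto simp: indicator_def mem_box prod.distrib prod_zero_iff)
  ultimately have "integral (cbox l u) (\<lambda>x. \<Prod>b\<in>Basis. g b (x \<bullet> b))
      = (\<integral>x. (\<Prod>b\<in>Basis. indicator {l \<bullet> b..u \<bullet> b} (x \<bullet> b) * g b (x \<bullet> b)) \<partial>lborel)"
    by (simp add: integral_cbox_eq_lborel)
  also have "\<dots> = (\<Prod>b\<in>Basis. \<integral>s. indicator {l \<bullet> b..u \<bullet> b} s * g b s \<partial>lborel)"
    by (rule integral_lborel_prod) (use borel_integrable_compact[OF compact_Icc cont_Icc] in simp)
  also have "\<dots> = (\<Prod>b\<in>Basis. integral {l \<bullet> b..u \<bullet> b} (g b))"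
    using integral_cbox_eq_lborel[of "l \<bullet> b" "u \<bullet> b" "g b" for b] cont_Icc
    by (simp add: cbox_interval cong: prod.cong)
  finally show ?thesis .
qed

lemma integral_cbox_prod_cart:
  fixes g :: "'n::finite \<Rightarrow> real \<Rightarrow> real" and l u :: "real^'n"
  assumes "\<And>i. continuous_on UNIV (g i)"
  shows "integral (cbox l u) (\<lambda>x. \<Prod>i\<in>UNIV. g i (x $ i)) = (\<Prod>i\<in>UNIV. integral {l $ i..u $ i} (g i))"
proof -
  let ?e = "\<lambda>i::'n. axis i (1::real)"
  have inj: "inj ?e"
    by (auto simp: inj_def axis_eq_axis)
  have Basis_eq: "Basis = range ?e"
    by (auto simp: Basis_vec_def)
  define G where "G b = g (inv ?e b)" for b
  have G: "G (?e i) = g i" for i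
    by (simp add: G_def inv_f_f[OF inj])
  have "integral (cbox l u) (\<lambda>x. \<Prod>b\<in>Basis. G b (x \<bullet> b)) = (\<Prod>b\<in>Basis. integral {l \<bullet> b..u \<bullet> b} (G b))"
    by (rule integral_cbox_prod_Basis) (auto simp: Basis_eq G assms)
  then show ?thesis
    by (simp add: Basis_eq prod.reindex[OF inj] G inner_axis)
qed

section \<open>Steklov functions of monomials\<close>

definition monomial :: "('n \<Rightarrow> nat) \<Rightarrow> real^'n \<Rightarrow> real" where
  "monomial a x = (\<Prod>i\<in>UNIV. x $ i ^ a i)"

text \<open>For \<open>k \<le> 4\<close> only, this is the mean value of \<open>s^k\<close> over \<open>[y - t, y + t]\<close>.\<close>
definition steklov_power :: "nat \<Rightarrow> real \<Rightarrow> real \<Rightarrow> real" where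
  "steklov_power k y t = y ^ k + t^2 * real (k * (k - 1)) / 6 * y ^ (k - 2) + (if k = 4 then t^4 / 5 else 0)"

lemma integral_power_centered:
  assumes "t > 0" "k \<le> 4"
  shows "integral {y - t..y + t} (\<lambda>s. s ^ k) = 2 * t * steklov_power k y t"
proof -
  have "integral {y - t..y + t} (\<lambda>s. s ^ k) = ((y + t) ^ Suc k - (y - t) ^ Suc k) / Suc k"
    using integral_cbox_eq_lborel[of "y - t" "y + t" "\<lambda>s. s ^ k"] integral_power[of "y - t" "y + t" k] assms(1)
    by (simp add: continuous_intros mult.commute)
  moreover have "k = 0 \<or> k = 1 \<or> k = 2 \<or> k = 3 \<or> k = 4"
    using assms(2) by auto
  ultimately show ?thesis
    by (auto simp: steklov_power_def field_simps eval_nat_numeral)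
qed

lemma steklov_monomial:
  assumes "t > 0" "\<And>i. a i \<le> 4"
  shows "steklov (monomial a) y t = (\<Prod>i\<in>UNIV. steklov_power (a i) (y $ i) t)"
proof -
  have "integral (cbox (y - (\<chi> i. t)) (y + (\<chi> i. t))) (monomial a)
      = (\<Prod>i\<in>UNIV. 2 * t * steklov_power (a i) (y $ i) t)"
    using integral_cbox_prod_cart[of "\<lambda>i s. s ^ a i" "y - (\<chi> i. t)" "y + (\<chi> i. t)"]
    by (simp add: monomial_def[abs_def] integral_power_centered assms continuous_intros)
  then show ?thesis
    using assms(1) by (simp add: steklov_def prod.distrib)
qed

lemma monomial_upd:
  "monomial (a(k := m)) y = y $ k ^ m * (\<Prod>i\<in>UNIV - {k}. y $ i ^ a i)"
proof -
  have "(\<Prod>i\<in>UNIV - {k}. y $ i ^ (a(k := m)) i) = (\<Prod>i\<in>UNIV - {k}. y $ i ^ a i)"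
    by (intro prod.cong) auto
  then show ?thesis
    unfolding monomial_def by (simp add: prod.remove[of UNIV k])
qed

lemma prod_add_second_order:
  fixes m w :: "'a \<Rightarrow> 'b::comm_semiring_1"
  assumes "finite A"
  shows "(\<Prod>i\<in>A. m i + w i) = (\<Prod>i\<in>A. m i) + (\<Sum>k\<in>A. w k * (\<Prod>i\<in>A - {k}. m i))
           + (\<Sum>X\<in>{X\<in>Pow A. 2 \<le> card X}. (\<Prod>i\<in>X. w i) * (\<Prod>i\<in>A - X. m i))"
proof -
  define F where "F X = (\<Prod>i\<in>X. w i) * (\<Prod>i\<in>A - X. m i)" for X
  have small: "X \<in> insert {} ((\<lambda>k. {k}) ` A)" if "X \<subseteq> A" "\<not> 2 \<le> card X" for X
  proof -
    have "card X = 0 \<or> card X = 1"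
      using that(2) by linarith
    then show ?thesis
      using that(1) finite_subset[OF that(1) assms] by (auto simp: card_1_singleton_iff)
  qed
  have "Pow A = insert {} ((\<lambda>k. {k}) ` A) \<union> {X\<in>Pow A. 2 \<le> card X}"
    using small by auto
  have "(\<Prod>i\<in>A. m i + w i) = (\<Sum>X\<in>Pow A. F X)"
    using prod_add[OF assms, of w m] by (simp add: F_def add.commute)
  also have "\<dots> = (\<Sum>X\<in>insert {} ((\<lambda>k. {k}) ` A) \<union> {X\<in>Pow A. 2 \<le> card X}. F X)"
    using \<open>Pow A = _\<close> by (rule arg_cong)
  also have "\<dots> = (\<Sum>X\<in>insert {} ((\<lambda>k. {k}) ` A). F X) + (\<Sum>X\<in>{X\<in>Pow A. 2 \<le> card X}. F X)"
    using assms by (intro sum.union_disjoint) auto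
  also have "(\<Sum>X\<in>insert {} ((\<lambda>k. {k}) ` A). F X) = F {} + (\<Sum>k\<in>A. F {k})"
    using assms by (subst sum.insert) (auto simp: sum.reindex inj_on_def)
  finally show ?thesis
    by (simp add: F_def)
qed

lemma exponents_of_degree_four:
  fixes a :: "'n::finite \<Rightarrow> nat"
  assumes "sum a UNIV \<le> 4" "2 \<le> card X" "\<forall>i\<in>X. 2 \<le> a i"
  shows "\<forall>i\<in>X. a i = 2" and "\<forall>i\<in>UNIV - X. a i = 0"
proof -
  have "2 * card X \<le> sum a X"
    using sum_mono[of X "\<lambda>_. 2" a] assms(3) by simp
  moreover have "sum a UNIV = sum a X + sum a (UNIV - X)"
    by (simp add: sum.subset_diff[of X UNIV])
  ultimately have rest: "sum a (UNIV - X) = 0" and X: "sum a X = 4" "card X = 2"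
    using assms(1,2) by linarith+
  show "\<forall>i\<in>UNIV - X. a i = 0"
    using rest by simp
  have "sum (\<lambda>i. a i - 2) X = 0"
    using X assms(3) by (simp add: sum_subtractf_nat)
  then show "\<forall>i\<in>X. a i = 2"
    using assms(3) by (auto simp: sum_eq_0_iff intro: le_antisym)
qed

lemma prod_corrections_const:
  fixes a :: "'n::finite \<Rightarrow> nat" and w :: "nat \<Rightarrow> real \<Rightarrow> real"
  assumes "sum a UNIV \<le> 4" "2 \<le> card X"
    and "\<And>k s. k < 2 \<Longrightarrow> w k s = 0" and "\<And>s s'. w 2 s = w 2 s'"
  shows "(\<Prod>i\<in>X. w (a i) (y $ i)) * (\<Prod>i\<in>UNIV - X. y $ i ^ a i)
       = (\<Prod>i\<in>X. w (a i) (y' $ i)) * (\<Prod>i\<in>UNIV - X. y' $ i ^ a i)"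
proof (cases "\<forall>i\<in>X. 2 \<le> a i")
  case True
  note a = exponents_of_degree_four[OF assms(1,2) True]
  have "(\<Prod>i\<in>X. w (a i) (y $ i)) = (\<Prod>i\<in>X. w (a i) (y' $ i))"
    using a(1) assms(4) by (intro prod.cong) auto
  moreover have "(\<Prod>i\<in>UNIV - X. y $ i ^ a i) = (\<Prod>i\<in>UNIV - X. y' $ i ^ a i)"
    using a(2) by (intro prod.cong) auto
  ultimately show ?thesis
    by simp
next
  case False
  then have zero: "(\<Prod>i\<in>X. w (a i) (z $ i)) = 0" for z
    using assms(3) by (auto simp: not_le intro!: prod_zero)
  show ?thesis
    by (simp only: zero mult_zero_left)
qed

lemma steklov_power_correction_single:
  fixes a :: "'n::finite \<Rightarrow> nat"
  assumes "sum a UNIV \<le> 4"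
  shows "(steklov_power (a k) (y $ k) t - y $ k ^ a k) * (\<Prod>i\<in>UNIV - {k}. y $ i ^ a i)
       = t^2 / 6 * real (a k * (a k - 1)) * monomial (a(k := a k - 2)) y + (if a k = 4 then t^4 / 5 else 0)"
proof -
  have "a k = 4 \<Longrightarrow> i \<noteq> k \<Longrightarrow> a i = 0" for i
    using assms sum.remove[of UNIV k a] by simp
  then have "a k = 4 \<Longrightarrow> (\<Prod>i\<in>UNIV - {k}. y $ i ^ a i) = 1"
    by (intro prod.neutral) auto
  then show ?thesis
    unfolding steklov_power_def monomial_upd by (simp add: algebra_simps del: of_nat_mult)
qed

lemma prod_steklov_power_expansion:
  fixes a :: "'n::finite \<Rightarrow> nat"
  assumes deg: "sum a UNIV \<le> 4"
  shows "\<exists>K. \<forall>y. (\<Prod>i\<in>UNIV. steklov_power (a i) (y $ i) t)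
           = monomial a y + t^2 / 6 * (\<Sum>k\<in>UNIV. real (a k * (a k - 1)) * monomial (a(k := a k - 2)) y) + K"
proof -
  define w where "w k s = steklov_power k s t - s ^ k" for k s
  define P where "P y X = (\<Prod>i\<in>X. w (a i) (y $ i)) * (\<Prod>i\<in>UNIV - X. y $ i ^ a i)" for y X
  define K where "K = (\<Sum>k\<in>UNIV. if a k = 4 then t^4 / 5 else 0) + (\<Sum>X\<in>{X. 2 \<le> card X}. P 0 X)"
  have P_const: "P y X = P 0 X" if "X \<in> {X. 2 \<le> card X}" for y X
    unfolding P_def using that
    by (intro prod_corrections_const[OF deg]) (auto simp: w_def steklov_power_def)
  have higher: "(\<Sum>X\<in>{X. 2 \<le> card X}. P y X) = (\<Sum>X\<in>{X. 2 \<le> card X}. P 0 X)" for y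
    by (intro sum.cong refl P_const)
  have expand: "(\<Prod>i\<in>UNIV. steklov_power (a i) (y $ i) t)
      = monomial a y + (\<Sum>k\<in>UNIV. w (a k) (y $ k) * (\<Prod>i\<in>UNIV - {k}. y $ i ^ a i))
        + (\<Sum>X\<in>{X. 2 \<le> card X}. P y X)" for y
    using prod_add_second_order[of UNIV "\<lambda>i. y $ i ^ a i" "\<lambda>i. w (a i) (y $ i)"]
    by (simp add: w_def P_def monomial_def)
  have single: "(\<Sum>k\<in>UNIV. w (a k) (y $ k) * (\<Prod>i\<in>UNIV - {k}. y $ i ^ a i))
      = t^2 / 6 * (\<Sum>k\<in>UNIV. real (a k * (a k - 1)) * monomial (a(k := a k - 2)) y)
        + (\<Sum>k\<in>UNIV. if a k = 4 then t^4 / 5 else 0)" for y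
    by (simp add: w_def steklov_power_correction_single[OF deg] sum.distrib sum_distrib_left mult.assoc)
  have "(\<Prod>i\<in>UNIV. steklov_power (a i) (y $ i) t)
      = monomial a y + t^2 / 6 * (\<Sum>k\<in>UNIV. real (a k * (a k - 1)) * monomial (a(k := a k - 2)) y) + K" for y
    unfolding K_def using expand[of y] single[of y] higher[of y] by linarith
  then show ?thesis
    by blast
qed

section \<open>Partial derivatives of polynomial functions\<close>

lemma pderiv_i_eqI:
  assumes "\<And>x. ((\<lambda>s. g (x + s *\<^sub>R axis j 1)) has_real_derivative g' x) (at 0)"
  shows "pderiv_i j g = g'"
  using assms by (simp add: pderiv_i_def fun_eq_iff DERIV_imp_deriv)

lemma monomial_has_pderiv:
  "((\<lambda>s. monomial a (x + s *\<^sub>R axis j 1)) has_real_derivative real (a j) * monomial (a(j := a j - 1)) x) (at 0)"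
proof -
  have "(\<Prod>i\<in>UNIV - {j}. (x + s *\<^sub>R axis j 1) $ i ^ a i) = (\<Prod>i\<in>UNIV - {j}. x $ i ^ a i)" for s
    by (intro prod.cong) (auto simp: axis_def)
  then have line: "monomial a (x + s *\<^sub>R axis j 1) = (x $ j + s) ^ a j * (\<Prod>i\<in>UNIV - {j}. x $ i ^ a i)" for s
    using monomial_upd[of a j "a j" "x + s *\<^sub>R axis j 1"] by (simp add: axis_def)
  have "((\<lambda>s. (x $ j + s) ^ a j * (\<Prod>i\<in>UNIV - {j}. x $ i ^ a i)) has_real_derivative
      real (a j) * (x $ j + 0) ^ (a j - 1) * 1 * (\<Prod>i\<in>UNIV - {j}. x $ i ^ a i)) (at 0)"
    by (intro derivative_eq_intros refl) auto
  then show ?thesis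
    unfolding line monomial_upd by (simp add: mult.assoc)
qed

text \<open>Unlike \<^const>\<open>poly_fun_deg_le\<close>, this description is visibly closed under partial differentiation.\<close>
inductive polynomial_fun :: "(real^'n \<Rightarrow> real) \<Rightarrow> bool" where
  monomial: "polynomial_fun (monomial a)"
| add: "polynomial_fun g \<Longrightarrow> polynomial_fun h \<Longrightarrow> polynomial_fun (\<lambda>x. g x + h x)"
| scale: "polynomial_fun g \<Longrightarrow> polynomial_fun (\<lambda>x. c * g x)"

lemma polynomial_fun_has_pderiv:
  assumes "polynomial_fun g"
  shows "\<exists>g'. polynomial_fun g' \<and> (\<forall>x. ((\<lambda>s. g (x + s *\<^sub>R axis j 1)) has_real_derivative g' x) (at 0))"
  using assms
proof induction
  case (monomial a)
  show ?case
    using monomial_has_pderiv polynomial_fun.monomial polynomial_fun.scale by blast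
next
  case (add g h)
  then obtain g' h' where "polynomial_fun g'" "polynomial_fun h'"
    and "\<And>x. ((\<lambda>s. g (x + s *\<^sub>R axis j 1)) has_real_derivative g' x) (at 0)"
    and "\<And>x. ((\<lambda>s. h (x + s *\<^sub>R axis j 1)) has_real_derivative h' x) (at 0)"
    by blast
  then show ?case
    by (intro exI[of _ "\<lambda>x. g' x + h' x"]) (auto intro: polynomial_fun.add DERIV_add)
next
  case (scale g c)
  then obtain g' where "polynomial_fun g'"
    and "\<And>x. ((\<lambda>s. g (x + s *\<^sub>R axis j 1)) has_real_derivative g' x) (at 0)"
    by blast
  then show ?case
    by (intro exI[of _ "\<lambda>x. c * g' x"]) (auto intro: polynomial_fun.scale DERIV_cmult)
qed

lemma has_real_derivative_pderiv_i:
  "polynomial_fun g \<Longrightarrow> ((\<lambda>s. g (x + s *\<^sub>R axis j 1)) has_real_derivative pderiv_i j g x) (at 0)"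
  by (metis polynomial_fun_has_pderiv pderiv_i_eqI)

lemma polynomial_fun_pderiv_i: "polynomial_fun g \<Longrightarrow> polynomial_fun (pderiv_i j g)"
  by (metis polynomial_fun_has_pderiv pderiv_i_eqI)

lemma pderiv_i_monomial: "pderiv_i j (monomial a) = (\<lambda>x. real (a j) * monomial (a(j := a j - 1)) x)"
  by (rule pderiv_i_eqI[OF monomial_has_pderiv])

lemma pderiv_i_add:
  "polynomial_fun g \<Longrightarrow> polynomial_fun h \<Longrightarrow> pderiv_i j (\<lambda>x. g x + h x) = (\<lambda>x. pderiv_i j g x + pderiv_i j h x)"
  by (intro pderiv_i_eqI DERIV_add has_real_derivative_pderiv_i)

lemma pderiv_i_scale:
  "polynomial_fun g \<Longrightarrow> pderiv_i j (\<lambda>x. c * g x) = (\<lambda>x. c * pderiv_i j g x)"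
  by (intro pderiv_i_eqI DERIV_cmult has_real_derivative_pderiv_i)

lemma pderiv_i_const: "pderiv_i j (\<lambda>x. c) = (\<lambda>x. 0)"
  by (intro pderiv_i_eqI DERIV_const)

lemma pderiv_i_sum:
  "finite I \<Longrightarrow> (\<And>k. k \<in> I \<Longrightarrow> polynomial_fun (g k)) \<Longrightarrow>
    pderiv_i j (\<lambda>x. \<Sum>k\<in>I. g k x) = (\<lambda>x. \<Sum>k\<in>I. pderiv_i j (g k) x)"
  by (intro pderiv_i_eqI DERIV_sum has_real_derivative_pderiv_i)

lemma polynomial_fun_const: "polynomial_fun (\<lambda>x. c)"
  using polynomial_fun.scale[OF polynomial_fun.monomial, of c "\<lambda>_. 0"] by (simp add: monomial_def)

lemma polynomial_fun_sum:
  "finite I \<Longrightarrow> (\<And>k. k \<in> I \<Longrightarrow> polynomial_fun (g k)) \<Longrightarrow> polynomial_fun (\<lambda>x. \<Sum>k\<in>I. g k x)"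
  by (induction I rule: finite_induct) (auto intro: polynomial_fun_const polynomial_fun.add)

lemma poly_fun_deg_le_eq:
  "poly_fun_deg_le d f \<longleftrightarrow>
     (\<exists>E c. finite E \<and> (\<forall>a\<in>E. sum a UNIV \<le> d) \<and> f = (\<lambda>x. \<Sum>a\<in>E. c a * monomial a x))"
  by (simp add: poly_fun_deg_le_def monomial_def)

lemma polynomial_fun_if_poly_fun_deg_le: "poly_fun_deg_le d f \<Longrightarrow> polynomial_fun f"
  unfolding poly_fun_deg_le_eq
  by (auto intro!: polynomial_fun_sum polynomial_fun.scale polynomial_fun.monomial)

lemma continuous_on_polynomial_fun: "polynomial_fun g \<Longrightarrow> continuous_on S g"
  by (induction rule: polynomial_fun.induct) (auto simp: monomial_def[abs_def] intro!: continuous_intros)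

lemma hess_add:
  "polynomial_fun g \<Longrightarrow> polynomial_fun h \<Longrightarrow> hess (\<lambda>x. g x + h x) x = hess g x + hess h x"
  by (simp add: hess_def pderiv_i_add polynomial_fun_pderiv_i vec_eq_iff)

lemma hess_scale: "polynomial_fun g \<Longrightarrow> hess (\<lambda>x. c * g x) x = c *\<^sub>R hess g x"
  by (simp add: hess_def pderiv_i_scale polynomial_fun_pderiv_i vec_eq_iff)

lemma hess_const: "hess (\<lambda>x. c) x = 0"
  by (simp add: hess_def pderiv_i_const vec_eq_iff)

lemma hess_sum:
  "finite I \<Longrightarrow> (\<And>k. k \<in> I \<Longrightarrow> polynomial_fun (g k)) \<Longrightarrow>
    hess (\<lambda>x. \<Sum>k\<in>I. g k x) x = (\<Sum>k\<in>I. hess (g k) x)"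
  by (simp add: hess_def pderiv_i_sum polynomial_fun_pderiv_i vec_eq_iff sum_component)

lemma continuous_on_hess: "polynomial_fun g \<Longrightarrow> continuous_on S (\<lambda>x. hess g x $ i $ j)"
  unfolding hess_def by (simp add: continuous_on_polynomial_fun polynomial_fun_pderiv_i)

definition laplacian :: "(real^'n \<Rightarrow> real) \<Rightarrow> real^'n \<Rightarrow> real" where
  "laplacian g x = (\<Sum>k\<in>UNIV. pderiv_i k (pderiv_i k g) x)"

lemma polynomial_fun_laplacian: "polynomial_fun g \<Longrightarrow> polynomial_fun (laplacian g)"
  unfolding laplacian_def[abs_def] by (intro polynomial_fun_sum polynomial_fun_pderiv_i) auto

lemma hess_laplacian:
  "polynomial_fun g \<Longrightarrow> hess (laplacian g) x = (\<Sum>k\<in>UNIV. hess (pderiv_i k (pderiv_i k g)) x)"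
  unfolding laplacian_def[abs_def] by (intro hess_sum polynomial_fun_pderiv_i) auto

lemma laplacian_monomial:
  "laplacian (monomial a) x = (\<Sum>k\<in>UNIV. real (a k * (a k - 1)) * monomial (a(k := a k - 2)) x)"
  by (simp add: laplacian_def pderiv_i_monomial pderiv_i_scale polynomial_fun.monomial numeral_2_eq_2 mult.assoc)

lemma laplacian_sum:
  assumes "finite E" "\<And>e. e \<in> E \<Longrightarrow> polynomial_fun (g e)"
  shows "laplacian (\<lambda>x. \<Sum>e\<in>E. c e * g e x) x = (\<Sum>e\<in>E. c e * laplacian (g e) x)"
proof -
  have "pderiv_i k (pderiv_i k (\<lambda>x. \<Sum>e\<in>E. c e * g e x)) = (\<lambda>x. \<Sum>e\<in>E. c e * pderiv_i k (pderiv_i k (g e)) x)" for k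
    using assms by (simp add: pderiv_i_sum pderiv_i_scale polynomial_fun.scale polynomial_fun_pderiv_i)
  then show ?thesis
    by (simp add: laplacian_def sum.swap[of _ UNIV] sum_distrib_left)
qed

section \<open>The Hessian of the Steklov function of a quartic polynomial\<close>

lemma steklov_sum:
  assumes "finite E"
  shows "steklov (\<lambda>x. \<Sum>a\<in>E. c a * monomial a x) y t = (\<Sum>a\<in>E. c a * steklov (monomial a) y t)"
proof -
  let ?box = "cbox (y - (\<chi> i. t)) (y + (\<chi> i. t))"
  have "(\<lambda>x. c a * monomial a x) integrable_on ?box" for a
    by (intro integrable_continuous continuous_on_polynomial_fun polynomial_fun.scale polynomial_fun.monomial)
  then have "integral ?box (\<lambda>x. \<Sum>a\<in>E. c a * monomial a x) = (\<Sum>a\<in>E. c a * integral ?box (monomial a))"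
    by (simp add: integral_sum[OF assms])
  then show ?thesis
    by (simp add: steklov_def sum_divide_distrib)
qed

lemma steklov_monomial_deg4:
  assumes "sum a UNIV \<le> 4" "t > 0"
  shows "\<exists>K. \<forall>y. steklov (monomial a) y t = monomial a y + t^2 / 6 * laplacian (monomial a) y + K"
proof -
  have "a i \<le> 4" for i
    using member_le_sum[of i UNIV a] assms(1) by simp
  then show ?thesis
    using prod_steklov_power_expansion[OF assms(1), of t]
    by (simp add: steklov_monomial[OF assms(2)] laplacian_monomial)
qed

lemma steklov_poly_deg4:
  assumes "poly_fun_deg_le 4 f" "t > 0"
  shows "\<exists>K. \<forall>y. steklov f y t = f y + t^2 / 6 * laplacian f y + K"
proof -
  obtain E c where E: "finite E" "\<forall>a\<in>E. sum a UNIV \<le> 4" and f: "f = (\<lambda>x. \<Sum>a\<in>E. c a * monomial a x)"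
    using assms(1) unfolding poly_fun_deg_le_eq by blast
  have "\<forall>a\<in>E. \<exists>K. \<forall>y. steklov (monomial a) y t = monomial a y + t^2 / 6 * laplacian (monomial a) y + K"
    using steklov_monomial_deg4[OF _ assms(2)] E(2) by blast
  then obtain K where K: "\<forall>a\<in>E. \<forall>y. steklov (monomial a) y t = monomial a y + t^2 / 6 * laplacian (monomial a) y + K a"
    by metis
  have "steklov f y t = (\<Sum>a\<in>E. c a * (monomial a y + t^2 / 6 * laplacian (monomial a) y + K a))" for y
    unfolding f steklov_sum[OF E(1)] using K by simp
  also have "\<dots> y = f y + t^2 / 6 * laplacian f y + (\<Sum>a\<in>E. c a * K a)" for y
    unfolding f laplacian_sum[OF E(1) polynomial_fun.monomial]
    by (simp add: algebra_simps sum.distrib sum_distrib_left)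
  finally show ?thesis by blast
qed

lemma hess_steklov_poly_deg4:
  assumes "poly_fun_deg_le 4 f" "t > 0"
  shows "hess (\<lambda>y. steklov f y t) x = hess f x + (t^2 / 6) *\<^sub>R hess (laplacian f) x"
proof -
  obtain K where "\<And>y. steklov f y t = f y + t^2 / 6 * laplacian f y + K"
    using steklov_poly_deg4[OF assms] by blast
  then have stek: "(\<lambda>y. steklov f y t) = (\<lambda>y. (f y + t^2 / 6 * laplacian f y) + K)"
    by simp
  have f: "polynomial_fun f" and lap: "polynomial_fun (laplacian f)"
    using polynomial_fun_if_poly_fun_deg_le[OF assms(1)] polynomial_fun_laplacian by blast+
  have "hess (\<lambda>y. steklov f y t) x = hess (\<lambda>y. f y + t^2 / 6 * laplacian f y) x + hess (\<lambda>y. K) x"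
    unfolding stek by (intro hess_add polynomial_fun.add polynomial_fun.scale polynomial_fun_const f lap)
  also have "\<dots> = hess f x + (t^2 / 6) *\<^sub>R hess (laplacian f) x"
    by (simp only: hess_add[OF f polynomial_fun.scale[OF lap]] hess_scale[OF lap] hess_const add_0_right)
  finally show ?thesis .
qed

section \<open>Quadratic forms\<close>

lemma inner_matrix_vector_eq_sum:
  fixes B :: "real^'n^'m"
  shows "a \<bullet> (B *v b) = (\<Sum>i\<in>UNIV. \<Sum>j\<in>UNIV. a $ i * B $ i $ j * b $ j)"
  by (simp add: inner_vec_def matrix_vector_mult_def sum_distrib_left mult.assoc)

lemma quadratic_form_sum:
  fixes B :: "real^'n^'n"
  shows "(\<Sum>i\<in>I. c i *\<^sub>R x i) \<bullet> (B *v (\<Sum>j\<in>I. c j *\<^sub>R x j)) = (\<Sum>i\<in>I. \<Sum>j\<in>I. c i * c j * (x i \<bullet> (B *v x j)))"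
proof -
  have "linear ((*v) B)"
    by simp
  then have "B *v (\<Sum>j\<in>I. c j *\<^sub>R x j) = (\<Sum>j\<in>I. c j *\<^sub>R (B *v x j))"
    by (simp add: linear_sum linear_scale)
  then show ?thesis
    unfolding inner_sum_left by (simp add: inner_sum_right sum_distrib_left mult_ac)
qed

lemma quadratic_form_scaleR:
  fixes B :: "real^'n^'n"
  shows "(c *\<^sub>R z) \<bullet> (B *v (c *\<^sub>R z)) = c\<^sup>2 * (z \<bullet> (B *v z))"
  by (simp add: matrix_vector_mult_scaleR power2_eq_square)

lemma nonneg_on_null_space_if_psd_add:
  assumes "psd (B + s *\<^sub>R C)" "z \<in> null_space C"
  shows "0 \<le> z \<bullet> (B *v z)"
proof -
  have "z \<bullet> ((B + s *\<^sub>R C) *v z) = z \<bullet> (B *v z) + s * (z \<bullet> (C *v z))"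
    by (simp add: matrix_vector_mult_add_rdistrib scaleR_matrix_vector_assoc[symmetric] inner_add_right)
  moreover have "0 \<le> z \<bullet> ((B + s *\<^sub>R C) *v z)"
    using assms(1) unfolding psd_def by blast
  moreover have "C *v z = 0"
    using assms(2) by (simp add: null_space_def)
  ultimately show ?thesis
    by simp
qed

lemma nonneg_on_null_space_if_eventually_psd:
  assumes "\<exists>t0>0. \<forall>t>t0. psd (B + (t\<^sup>2 / 6) *\<^sub>R C)" "z \<in> null_space C"
  shows "0 \<le> z \<bullet> (B *v z)"
proof -
  obtain t0 where "0 < t0" "\<forall>t>t0. psd (B + (t\<^sup>2 / 6) *\<^sub>R C)"
    using assms(1) by blast
  then have "psd (B + ((t0 + 1)\<^sup>2 / 6) *\<^sub>R C)"
    by simp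
  then show ?thesis
    using assms(2) by (rule nonneg_on_null_space_if_psd_add)
qed

lemma quadratic_form_add_ge:
  fixes B :: "real^'n^'n"
  assumes "\<And>a b. \<bar>a \<bullet> (B *v b)\<bar> \<le> M * norm a * norm b"
  shows "z \<bullet> (B *v z) - M * (norm u)\<^sup>2 - 2 * M * norm u * norm z \<le> (u + z) \<bullet> (B *v (u + z))"
proof -
  have "(u + z) \<bullet> (B *v (u + z)) = u \<bullet> (B *v u) + u \<bullet> (B *v z) + z \<bullet> (B *v u) + z \<bullet> (B *v z)"
    by (simp add: matrix_vector_right_distrib inner_add_left inner_add_right)
  moreover have "- M * (norm u)\<^sup>2 \<le> u \<bullet> (B *v u)" "- M * norm u * norm z \<le> u \<bullet> (B *v z)"
    "- M * norm u * norm z \<le> z \<bullet> (B *v u)"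
    using assms[of u u] assms[of u z] assms[of z u] by (auto simp: abs_le_iff power2_eq_square mult_ac)
  ultimately show ?thesis
    by linarith
qed

lemma quadratic_nonneg_if_dominant:
  fixes X M d a b :: real
  assumes "d > 0" "M + M\<^sup>2 / d \<le> X"
  shows "0 \<le> X * a\<^sup>2 - M * a\<^sup>2 - 2 * M * a * b + d * b\<^sup>2"
proof -
  have "(M + M\<^sup>2 / d) * a\<^sup>2 \<le> X * a\<^sup>2"
    using assms(2) by (simp add: mult_right_mono)
  moreover have "M\<^sup>2 / d * a\<^sup>2 - 2 * M * a * b + d * b\<^sup>2 = (M * a - d * b)\<^sup>2 / d"
    using assms(1) by (simp add: field_simps power2_eq_square)
  moreover have "0 \<le> (M * a - d * b)\<^sup>2 / d"
    using assms(1) by simp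
  ultimately show ?thesis
    by (simp add: algebra_simps)
qed

lemma bilinear_bound_on_compact:
  fixes A :: "'a::metric_space \<Rightarrow> real^'n^'m"
  assumes "compact S" "\<And>i j. continuous_on S (\<lambda>x. A x $ i $ j)"
  obtains M where "\<And>x a b. x \<in> S \<Longrightarrow> \<bar>a \<bullet> (A x *v b)\<bar> \<le> M * norm a * norm b"
proof -
  define N where "N x = (\<Sum>i\<in>UNIV. \<Sum>j\<in>UNIV. \<bar>A x $ i $ j\<bar>)" for x
  have "compact (N ` S)"
    unfolding N_def
    by (intro compact_continuous_image continuous_on_sum continuous_on_rabs assms)
  then obtain M where "\<forall>y\<in>N ` S. \<bar>y\<bar> \<le> M"
    using compact_imp_bounded bounded_real by blast
  then have M: "N x \<le> M" if "x \<in> S" for x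
    using that by fastforce
  have "\<bar>a \<bullet> (A x *v b)\<bar> \<le> M * norm a * norm b" if "x \<in> S" for x a b
  proof -
    have "norm (A x *v b) \<le> N x * norm b"
      using onorm[OF matrix_vector_mul_bounded_linear, of "A x" b] onorm_le_matrix_component_sum[of "A x"]
      unfolding N_def by (meson mult_right_mono norm_ge_zero order_trans)
    also have "\<dots> \<le> M * norm b"
      using M[OF that] by (simp add: mult_right_mono)
    finally have "norm (A x *v b) \<le> M * norm b" .
    then have "norm a * norm (A x *v b) \<le> norm a * (M * norm b)"
      by (simp add: mult_left_mono)
    with Cauchy_Schwarz_ineq2[of a "A x *v b"] show ?thesis
      by (simp add: mult_ac)
  qed
  then show ?thesis
    using that by blast
qed

lemma quadratic_form_uniformly_positive:
  fixes A :: "'a::metric_space \<Rightarrow> real^'n^'n"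
  assumes "compact S" "\<And>i j. continuous_on S (\<lambda>x. A x $ i $ j)" "subspace N"
    and pos: "\<And>x z. x \<in> S \<Longrightarrow> z \<in> N \<Longrightarrow> z \<noteq> 0 \<Longrightarrow> 0 < z \<bullet> (A x *v z)"
  obtains d where "d > 0" "\<And>x z. x \<in> S \<Longrightarrow> z \<in> N \<Longrightarrow> d * (norm z)\<^sup>2 \<le> z \<bullet> (A x *v z)"
proof -
  define K where "K = (sphere 0 1 \<inter> N) \<times> S"
  define q where "q p = fst p \<bullet> (A (snd p) *v fst p)" for p
  have "compact K"
    unfolding K_def using assms(1,3) by (intro compact_Times compact_Int_closed closed_subspace) auto
  have "continuous_on K q"
  proof -
    have entry: "continuous_on K (\<lambda>p. A (snd p) $ i $ j)" for i j
      by (rule continuous_on_compose2[OF assms(2) continuous_on_snd]) (auto simp: K_def)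
    show ?thesis
      unfolding q_def inner_matrix_vector_eq_sum
      by (intro continuous_on_sum continuous_on_mult entry continuous_intros)
  qed
  have scale: "z \<bullet> (A x *v z) = (norm z)\<^sup>2 * q (z /\<^sub>R norm z, x)" for z x
  proof (cases "z = 0")
    case False
    then have "z = norm z *\<^sub>R (z /\<^sub>R norm z)"
      by simp
    then have "z \<bullet> (A x *v z) = (norm z *\<^sub>R (z /\<^sub>R norm z)) \<bullet> (A x *v (norm z *\<^sub>R (z /\<^sub>R norm z)))"
      by simp
    then show ?thesis
      by (simp only: quadratic_form_scaleR q_def fst_conv snd_conv)
  qed simp
  have in_K: "(z /\<^sub>R norm z, x) \<in> K" if "x \<in> S" "z \<in> N" "z \<noteq> 0" for x z
    using that assms(3) by (simp add: K_def subspace_scale)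
  show ?thesis
  proof (cases "K = {}")
    case True
    then show ?thesis
      using that[of 1] in_K by fastforce
  next
    case False
    then obtain p where "p \<in> K" and min: "\<And>p'. p' \<in> K \<Longrightarrow> q p \<le> q p'"
      using continuous_attains_inf[OF \<open>compact K\<close> _ \<open>continuous_on K q\<close>] by blast
    have "0 < q p"
      using \<open>p \<in> K\<close> by (cases p) (auto simp: K_def q_def intro!: pos)
    moreover have "q p * (norm z)\<^sup>2 \<le> z \<bullet> (A x *v z)" if "x \<in> S" "z \<in> N" for x z
      using min[OF in_K[OF that]] by (cases "z = 0") (simp_all add: scale mult_right_mono mult.commute)
    ultimately show ?thesis
      using that[of "q p"] by blast
  qed
qed

lemma down_closed_eq_atLeastAtMost_card:
  assumes "P \<subseteq> {1..n}" "\<And>i j. 1 \<le> i \<Longrightarrow> i \<le> j \<Longrightarrow> j \<in> P \<Longrightarrow> i \<in> P"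
  shows "P = {1..card P}"
proof (cases "P = {}")
  case False
  have "finite P"
    using assms(1) finite_subset by blast
  have "P = {1..Max P}"
  proof
    show "P \<subseteq> {1..Max P}"
      using assms(1) \<open>finite P\<close> by (auto intro: Max_ge)
    show "{1..Max P} \<subseteq> P"
      using assms(2)[of _ "Max P"] Max_in[OF \<open>finite P\<close> False] by auto
  qed
  then obtain m where "P = {1..m}"
    by blast
  then show ?thesis
    by simp
qed simp

section \<open>A sorted orthonormal eigenbasis\<close>

locale sorted_eigenbasis =
  fixes C :: "real^'n^'n" and lam :: "nat \<Rightarrow> real" and v :: "nat \<Rightarrow> real^'n"
  assumes orthonormal: "\<forall>i\<in>{1..CARD('n)}. \<forall>j\<in>{1..CARD('n)}. v i \<bullet> v j = (if i = j then 1 else 0)"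
    and eigen: "\<forall>i\<in>{1..CARD('n)}. C *v v i = lam i *\<^sub>R v i"
    and ordered: "\<forall>i j. 1 \<le> i \<longrightarrow> i \<le> j \<longrightarrow> j \<le> CARD('n) \<longrightarrow> lam j \<le> lam i"
    and psd: "psd C"
begin

definition r :: nat where "r = dim (orthogonal_comp (null_space C))"

lemma inner_sum_eigenvectors:
  assumes "P \<subseteq> {1..CARD('n)}" "j \<in> {1..CARD('n)}"
  shows "(\<Sum>i\<in>P. c i *\<^sub>R v i) \<bullet> v j = (if j \<in> P then c j else 0)"
proof -
  have "(\<Sum>i\<in>P. c i *\<^sub>R v i) \<bullet> v j = (\<Sum>i\<in>P. if i = j then c i else 0)"
    unfolding inner_sum_left using assms orthonormal by (intro sum.cong) auto
  moreover have "finite P"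
    using assms(1) finite_subset by blast
  ultimately show ?thesis
    by (simp add: sum.delta)
qed

lemma norm_sum_eigenvectors:
  assumes "P \<subseteq> {1..CARD('n)}"
  shows "(norm (\<Sum>i\<in>P. c i *\<^sub>R v i))\<^sup>2 = (\<Sum>i\<in>P. (c i)\<^sup>2)"
proof -
  have "(norm (\<Sum>i\<in>P. c i *\<^sub>R v i))\<^sup>2 = (\<Sum>j\<in>P. c j * ((\<Sum>i\<in>P. c i *\<^sub>R v i) \<bullet> v j))"
    unfolding power2_norm_eq_inner by (simp only: inner_sum_right inner_scaleR_right)
  also have "\<dots> = (\<Sum>j\<in>P. (c j)\<^sup>2)"
    using assms by (intro sum.cong) (auto simp: inner_sum_eigenvectors[OF assms] power2_eq_square)
  finally show ?thesis .
qed

lemma inj_on_eigenvectors: "inj_on v {1..CARD('n)}"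
proof (rule inj_onI)
  fix i j
  assume "i \<in> {1..CARD('n)}" "j \<in> {1..CARD('n)}" "v i = v j"
  then show "i = j"
    using orthonormal by (metis zero_neq_one)
qed

lemma independent_eigenvectors: "independent (v ` {1..CARD('n)})"
proof (rule pairwise_orthogonal_independent)
  show "pairwise orthogonal (v ` {1..CARD('n)})"
    using orthonormal by (auto simp: pairwise_def orthogonal_def)
  show "0 \<notin> v ` {1..CARD('n)}"
    using orthonormal by fastforce
qed

lemma eigenvector_expansion: "w = (\<Sum>i\<in>{1..CARD('n)}. (w \<bullet> v i) *\<^sub>R v i)"
proof -
  let ?I = "{1..CARD('n)}"
  have "card (v ` ?I) = CARD('n)"
    using card_image[OF inj_on_eigenvectors] by simp
  then have span: "UNIV \<subseteq> span (v ` ?I)"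
    by (intro card_ge_dim_independent independent_eigenvectors) auto
  define u where "u = w - (\<Sum>i\<in>?I. (w \<bullet> v i) *\<^sub>R v i)"
  have "orthogonal u y" if "y \<in> v ` ?I" for y
    using that by (auto simp: u_def orthogonal_def inner_diff_left inner_sum_eigenvectors)
  then have "orthogonal u u"
    using orthogonal_to_span span by blast
  then have "u = 0"
    by (simp add: orthogonal_def)
  then show ?thesis
    by (simp add: u_def)
qed

lemma C_mult_expansion: "C *v w = (\<Sum>i\<in>{1..CARD('n)}. (lam i * (w \<bullet> v i)) *\<^sub>R v i)"
proof -
  have lin: "linear ((*v) C)"
    by simp
  have "C *v w = C *v (\<Sum>i\<in>{1..CARD('n)}. (w \<bullet> v i) *\<^sub>R v i)"
    by (rule arg_cong[OF eigenvector_expansion])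
  also have "\<dots> = (\<Sum>i\<in>{1..CARD('n)}. (lam i * (w \<bullet> v i)) *\<^sub>R v i)"
    unfolding linear_sum[OF lin] linear_scale[OF lin] using eigen by (intro sum.cong) auto
  finally show ?thesis .
qed

lemma quadratic_form_C: "w \<bullet> (C *v w) = (\<Sum>i\<in>{1..CARD('n)}. lam i * (w \<bullet> v i)\<^sup>2)"
  unfolding C_mult_expansion by (simp add: inner_sum_right power2_eq_square mult_ac)

lemma lam_nonneg: "i \<in> {1..CARD('n)} \<Longrightarrow> 0 \<le> lam i"
  using psd orthonormal eigen unfolding psd_def by (metis inner_scaleR_right mult.right_neutral)

lemma null_space_iff_orthogonal_positive:
  "z \<in> null_space C \<longleftrightarrow> (\<forall>i\<in>{1..CARD('n)}. 0 < lam i \<longrightarrow> z \<bullet> v i = 0)"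
proof
  assume z: "z \<in> null_space C"
  show "\<forall>i\<in>{1..CARD('n)}. 0 < lam i \<longrightarrow> z \<bullet> v i = 0"
  proof (intro ballI impI)
    fix i
    assume "i \<in> {1..CARD('n)}" "0 < lam i"
    moreover have "(C *v z) \<bullet> v i = lam i * (z \<bullet> v i)"
      using \<open>i \<in> {1..CARD('n)}\<close> by (simp add: C_mult_expansion inner_sum_eigenvectors)
    ultimately show "z \<bullet> v i = 0"
      using z by (simp add: null_space_def)
  qed
next
  assume "\<forall>i\<in>{1..CARD('n)}. 0 < lam i \<longrightarrow> z \<bullet> v i = 0"
  then show "z \<in> null_space C"
    using lam_nonneg by (auto simp: null_space_def C_mult_expansion less_le intro!: sum.neutral)
qed

lemma r_eq_card: "r = card {i\<in>{1..CARD('n)}. 0 < lam i}"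
proof -
  define P where "P = {i\<in>{1..CARD('n)}. 0 < lam i}"
  have "null_space C = orthogonal_comp (span (v ` P))"
  proof (intro set_eqI iffI)
    fix z
    assume "z \<in> null_space C"
    then have "orthogonal z y" if "y \<in> v ` P" for y
      using that by (auto simp: P_def orthogonal_def null_space_iff_orthogonal_positive)
    then show "z \<in> orthogonal_comp (span (v ` P))"
      unfolding orthogonal_comp_def using orthogonal_to_span orthogonal_commute by blast
  next
    fix z
    assume "z \<in> orthogonal_comp (span (v ` P))"
    then have "v i \<bullet> z = 0" if "i \<in> P" for i
      using that span_base[of "v i" "v ` P"] unfolding orthogonal_comp_def orthogonal_def by blast
    then show "z \<in> null_space C"
      by (auto simp: P_def null_space_iff_orthogonal_positive inner_commute)
  qed
  then have "orthogonal_comp (null_space C) = span (v ` P)"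
    by (simp add: orthogonal_comp_self)
  moreover have "independent (v ` P)"
    by (rule independent_mono[OF independent_eigenvectors]) (auto simp: P_def)
  moreover have "card (v ` P) = card P"
    by (rule card_image[OF inj_on_subset[OF inj_on_eigenvectors]]) (auto simp: P_def)
  ultimately show ?thesis
    by (simp add: r_def P_def dim_eq_card_independent)
qed

lemma positive_eigenvalues: "{i\<in>{1..CARD('n)}. 0 < lam i} = {1..r}"
  unfolding r_eq_card
  by (rule down_closed_eq_atLeastAtMost_card[of _ "CARD('n)"])
    (use ordered in \<open>auto intro: order.strict_trans2\<close>)

lemma lam_pos_iff: "i \<in> {1..CARD('n)} \<Longrightarrow> 0 < lam i \<longleftrightarrow> i \<le> r"
  using positive_eigenvalues[unfolded set_eq_iff, rule_format, of i] by auto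

lemma r_le_CARD: "r \<le> CARD('n)"
proof (cases "r = 0")
  case False
  then have "r \<in> {i\<in>{1..CARD('n)}. 0 < lam i}"
    unfolding positive_eigenvalues by simp
  then show ?thesis
    by simp
qed simp

lemma lam_eq_0:
  assumes "i \<in> {r+1..CARD('n)}"
  shows "lam i = 0"
proof -
  have "i \<in> {1..CARD('n)}" "\<not> i \<le> r"
    using assms by auto
  then have "\<not> 0 < lam i" "0 \<le> lam i"
    using lam_pos_iff lam_nonneg by blast+
  then show ?thesis
    by simp
qed

lemma sum_split_at_r: "(\<Sum>i\<in>{1..CARD('n)}. g i) = (\<Sum>i\<in>{1..r}. g i) + (\<Sum>i\<in>{r+1..CARD('n)}. g i)"
proof -
  have "{1..CARD('n)} = {1..r} \<union> {r+1..CARD('n)}"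
    using r_le_CARD by auto
  then show ?thesis
    by (simp add: sum.union_disjoint)
qed

lemma null_space_iff: "z \<in> null_space C \<longleftrightarrow> (\<forall>i\<in>{1..r}. z \<bullet> v i = 0)"
  unfolding null_space_iff_orthogonal_positive using lam_pos_iff r_le_CARD by auto

lemma sum_upper_in_null_space: "(\<Sum>i\<in>{r+1..CARD('n)}. c i *\<^sub>R v i) \<in> null_space C"
  unfolding null_space_iff using r_le_CARD by (auto simp: inner_sum_eigenvectors)

lemma null_space_expansion:
  assumes "z \<in> null_space C"
  shows "z = (\<Sum>i\<in>{r+1..CARD('n)}. (z \<bullet> v i) *\<^sub>R v i)"
proof -
  have "(\<Sum>i\<in>{1..r}. (z \<bullet> v i) *\<^sub>R v i) = 0"
    using assms by (intro sum.neutral) (simp add: null_space_iff)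
  then have "(\<Sum>i\<in>{1..CARD('n)}. (z \<bullet> v i) *\<^sub>R v i) = (\<Sum>i\<in>{r+1..CARD('n)}. (z \<bullet> v i) *\<^sub>R v i)"
    unfolding sum_split_at_r by simp
  with eigenvector_expansion[of z] show ?thesis
    by (rule trans)
qed

lemma null_space_eq_0:
  assumes "0 < lam (CARD('n))"
  shows "null_space C = {0}"
proof -
  have "CARD('n) \<le> r"
    using lam_pos_iff[of "CARD('n)"] assms by simp
  then have empty: "{r+1..CARD('n)} = {}"
    by simp
  have "z = 0" if "z \<in> null_space C" for z
  proof -
    have "z = (\<Sum>i\<in>{r+1..CARD('n)}. (z \<bullet> v i) *\<^sub>R v i)"
      by (rule null_space_expansion[OF that])
    also have "\<dots> = 0"
      unfolding empty by simp
    finally show ?thesis .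
  qed
  moreover have "0 \<in> null_space C"
    by (simp add: null_space_def)
  ultimately show ?thesis
    by blast
qed

lemma quadratic_form_C_ge:
  assumes "\<forall>i\<in>{1..r}. lm \<le> lam i"
  shows "lm * (norm (\<Sum>i\<in>{1..r}. (w \<bullet> v i) *\<^sub>R v i))\<^sup>2 \<le> w \<bullet> (C *v w)"
proof -
  have "lm * (norm (\<Sum>i\<in>{1..r}. (w \<bullet> v i) *\<^sub>R v i))\<^sup>2 = (\<Sum>i\<in>{1..r}. lm * (w \<bullet> v i)\<^sup>2)"
    using r_le_CARD by (simp add: norm_sum_eigenvectors sum_distrib_left)
  also have "\<dots> \<le> (\<Sum>i\<in>{1..r}. lam i * (w \<bullet> v i)\<^sup>2)"
    using assms by (intro sum_mono mult_right_mono) auto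
  also have "\<dots> = w \<bullet> (C *v w)"
    unfolding quadratic_form_C sum_split_at_r[of "\<lambda>i. lam i * (w \<bullet> v i)\<^sup>2"] by (simp add: lam_eq_0)
  finally show ?thesis .
qed

lemma positive_eigenvalue_lower_bound:
  obtains lm where "0 < lm" "\<forall>i\<in>{1..r}. lm \<le> lam i"
proof (cases "r = 0")
  case False
  then have "1 \<le> r"
    by linarith
  then have "0 < lam r"
    using lam_pos_iff[of r] r_le_CARD by simp
  moreover have "\<forall>i\<in>{1..r}. lam r \<le> lam i"
    using ordered r_le_CARD by auto
  ultimately show ?thesis
    using that by blast
qed (use that[of 1] in simp)

lemma psd_add_scaled:
  fixes B :: "real^'n^'n"
  assumes "0 < d" "0 < lm" "\<forall>i\<in>{1..r}. lm \<le> lam i" "0 \<le> s"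
    and bound: "\<And>a b. \<bar>a \<bullet> (B *v b)\<bar> \<le> M * norm a * norm b"
    and pos: "\<And>z. z \<in> null_space C \<Longrightarrow> d * (norm z)\<^sup>2 \<le> z \<bullet> (B *v z)"
    and s: "M + M\<^sup>2 / d \<le> s * lm"
  shows "psd (B + s *\<^sub>R C)"
  unfolding psd_def
proof
  fix w
  define u where "u = (\<Sum>i\<in>{1..r}. (w \<bullet> v i) *\<^sub>R v i)"
  define z where "z = (\<Sum>i\<in>{r+1..CARD('n)}. (w \<bullet> v i) *\<^sub>R v i)"
  have w: "w = u + z"
    using eigenvector_expansion unfolding sum_split_at_r u_def z_def .
  have "z \<in> null_space C"
    unfolding z_def by (rule sum_upper_in_null_space)
  then have "d * (norm z)\<^sup>2 \<le> z \<bullet> (B *v z)"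
    by (rule pos)
  then have "d * (norm z)\<^sup>2 - M * (norm u)\<^sup>2 - 2 * M * norm u * norm z \<le> w \<bullet> (B *v w)"
    using quadratic_form_add_ge[OF bound, of z u] unfolding w by linarith
  moreover have "s * (lm * (norm u)\<^sup>2) \<le> s * (w \<bullet> (C *v w))"
    unfolding u_def by (rule mult_left_mono[OF quadratic_form_C_ge[OF assms(3)] assms(4)])
  moreover have "0 \<le> s * lm * (norm u)\<^sup>2 - M * (norm u)\<^sup>2 - 2 * M * norm u * norm z + d * (norm z)\<^sup>2"
    by (rule quadratic_nonneg_if_dominant[OF assms(1) s])
  moreover have "w \<bullet> ((B + s *\<^sub>R C) *v w) = w \<bullet> (B *v w) + s * (w \<bullet> (C *v w))"
    by (simp add: matrix_vector_mult_add_rdistrib scaleR_matrix_vector_assoc[symmetric] inner_add_right)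
  moreover have "s * lm * (norm u)\<^sup>2 = s * (lm * (norm u)\<^sup>2)"
    by simp
  ultimately show "0 \<le> w \<bullet> ((B + s *\<^sub>R C) *v w)"
    by linarith
qed

lemma eventually_psd_add_scaled:
  fixes A :: "'a::metric_space \<Rightarrow> real^'n^'n"
  assumes "compact S" "\<And>i j. continuous_on S (\<lambda>x. A x $ i $ j)"
    and "\<And>x z. x \<in> S \<Longrightarrow> z \<in> null_space C \<Longrightarrow> z \<noteq> 0 \<Longrightarrow> 0 < z \<bullet> (A x *v z)"
  shows "\<exists>t0>0. \<forall>x\<in>S. \<forall>t>t0. psd (A x + (t\<^sup>2 / 6) *\<^sub>R C)"
proof -
  obtain M where M: "\<And>x a b. x \<in> S \<Longrightarrow> \<bar>a \<bullet> (A x *v b)\<bar> \<le> M * norm a * norm b"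
    using bilinear_bound_on_compact[OF assms(1,2)] by blast
  have "subspace (null_space C)"
    by (auto simp: subspace_def null_space_def matrix_vector_right_distrib matrix_vector_mult_scaleR)
  then obtain d where d: "0 < d" "\<And>x z. x \<in> S \<Longrightarrow> z \<in> null_space C \<Longrightarrow> d * (norm z)\<^sup>2 \<le> z \<bullet> (A x *v z)"
    using quadratic_form_uniformly_positive[OF assms(1,2) _ assms(3)] by blast
  obtain lm where lm: "0 < lm" "\<forall>i\<in>{1..r}. lm \<le> lam i"
    by (rule positive_eigenvalue_lower_bound)
  define K where "K = (M + M\<^sup>2 / d) / lm"
  show ?thesis
  proof (intro exI[of _ "sqrt (6 * \<bar>K\<bar>) + 1"] conjI ballI allI impI)
    fix x t
    assume "x \<in> S" "sqrt (6 * \<bar>K\<bar>) + 1 < t"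
    then have "sqrt (6 * \<bar>K\<bar>) < sqrt (t\<^sup>2)"
      by simp
    then have "K \<le> t\<^sup>2 / 6"
      by (simp del: real_sqrt_abs)
    then have "M + M\<^sup>2 / d \<le> t\<^sup>2 / 6 * lm"
      using lm(1) by (simp add: K_def pos_divide_le_eq)
    then show "psd (A x + (t\<^sup>2 / 6) *\<^sub>R C)"
      using psd_add_scaled[OF d(1) lm _ M[OF \<open>x \<in> S\<close>] d(2)[OF \<open>x \<in> S\<close>]] by simp
  qed (simp add: add_nonneg_pos)
qed

lemma positive_on_null_space_if_positive_on_sphere:
  assumes "\<And>\<alpha>. (\<Sum>i\<in>{r+1..CARD('n)}. (\<alpha> i)\<^sup>2) = 1 \<Longrightarrow>
      0 < (\<Sum>i\<in>{r+1..CARD('n)}. \<Sum>j\<in>{r+1..CARD('n)}. \<alpha> i * \<alpha> j * (v i \<bullet> (B *v v j)))"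
    and "z \<in> null_space C" "z \<noteq> 0"
  shows "0 < z \<bullet> (B *v z)"
proof -
  define \<alpha> where "\<alpha> i = (z \<bullet> v i) / norm z" for i
  define u where "u = (\<Sum>i\<in>{r+1..CARD('n)}. \<alpha> i *\<^sub>R v i)"
  have "norm z *\<^sub>R u = (\<Sum>i\<in>{r+1..CARD('n)}. (z \<bullet> v i) *\<^sub>R v i)"
    using assms(3) by (simp add: u_def \<alpha>_def scaleR_sum_right)
  also have "\<dots> = z"
    by (rule null_space_expansion[OF assms(2), symmetric])
  finally have z: "norm z *\<^sub>R u = z" .
  then have "norm u = 1"
    using assms(3) by (metis norm_scaleR abs_norm_cancel mult_cancel_left1 norm_eq_zero)
  then have "(\<Sum>i\<in>{r+1..CARD('n)}. (\<alpha> i)\<^sup>2) = 1"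
    using norm_sum_eigenvectors[of "{r+1..CARD('n)}" \<alpha>] by (simp add: u_def)
  then have "0 < (\<Sum>i\<in>{r+1..CARD('n)}. \<Sum>j\<in>{r+1..CARD('n)}. \<alpha> i * \<alpha> j * (v i \<bullet> (B *v v j)))"
    by (rule assms(1))
  then have "0 < u \<bullet> (B *v u)"
    by (simp only: u_def quadratic_form_sum)
  moreover have "z \<bullet> (B *v z) = (norm z)\<^sup>2 * (u \<bullet> (B *v u))"
    using quadratic_form_scaleR[of "norm z" u B] unfolding z .
  ultimately show ?thesis
    using assms(3) by simp
qed

lemma nonneg_on_sphere_if_nonneg_on_null_space:
  assumes "\<And>z. z \<in> null_space C \<Longrightarrow> 0 \<le> z \<bullet> (B *v z)"
  shows "0 \<le> (\<Sum>i\<in>{r+1..CARD('n)}. \<Sum>j\<in>{r+1..CARD('n)}. \<alpha> i * \<alpha> j * (v i \<bullet> (B *v v j)))"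
  using assms[OF sum_upper_in_null_space[of \<alpha>]] by (simp add: quadratic_form_sum)

end

theorem lemma2:
  fixes f :: "real^'n \<Rightarrow> real"
    and C :: "real^'n^'n"
    and lam :: "nat \<Rightarrow> real"
    and v :: "nat \<Rightarrow> real^'n"
    and L :: real
  assumes poly: "poly_fun_deg_le 4 f"
    and C_def: "\<forall>x. C = (\<Sum>i\<in>UNIV. hess (pderiv_i i (pderiv_i i f)) x)"
    and C_psd: "psd C"
    and C_nz: "C \<noteq> 0"
    and orthonormal: "\<forall>i\<in>{1..CARD('n)}. \<forall>j\<in>{1..CARD('n)}. v i \<bullet> v j = (if i = j then 1 else 0)"
    and eigen: "\<forall>i\<in>{1..CARD('n)}. C *v v i = lam i *\<^sub>R v i"
    and ordered: "\<forall>i j. 1 \<le> i \<longrightarrow> i \<le> j \<longrightarrow> j \<le> CARD('n) \<longrightarrow> lam j \<le> lam i"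
    and L_pos: "L > 0"
  shows
    "(lam (CARD('n)) = 0 \<longrightarrow>
       (let r = dim (orthogonal_comp (null_space C));
            phi = (\<lambda>(\<alpha>::nat \<Rightarrow> real) x.
                     \<Sum>i\<in>{r+1..CARD('n)}. \<Sum>j\<in>{r+1..CARD('n)}.
                        \<alpha> i * \<alpha> j * (v i \<bullet> (hess f x *v v j)));
            S = {\<alpha>::nat \<Rightarrow> real. (\<Sum>i\<in>{r+1..CARD('n)}. (\<alpha> i)\<^sup>2) = 1}
        in ((\<forall>\<alpha>\<in>S. \<forall>x\<in>cball 0 L. phi \<alpha> x > 0) \<longrightarrow>
              (\<exists>t0>0. \<forall>x\<in>cball 0 L. \<forall>t>t0. psd (hess (\<lambda>y. steklov f y t) x)))
         \<and> ((\<exists>t0>0. \<forall>x\<in>cball 0 L. \<forall>t>t0. psd (hess (\<lambda>y. steklov f y t) x)) \<longrightarrow>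
              (\<forall>\<alpha>\<in>S. \<forall>x\<in>cball 0 L. phi \<alpha> x \<ge> 0))))
     \<and> (lam (CARD('n)) > 0 \<longrightarrow>
          (\<exists>t0>0. \<forall>x\<in>cball 0 L. \<forall>t>t0. psd (hess (\<lambda>y. steklov f y t) x)))"
proof -
  interpret sorted_eigenbasis C lam v
    using orthonormal eigen ordered C_psd by unfold_locales
  have f: "polynomial_fun f"
    using poly by (rule polynomial_fun_if_poly_fun_deg_le)
  have hess_steklov: "hess (\<lambda>y. steklov f y t) x = hess f x + (t\<^sup>2 / 6) *\<^sub>R C" if "0 < t" for t x
    using hess_steklov_poly_deg4[OF poly that] hess_laplacian[OF f] C_def by simp
  have convex_iff: "(\<exists>t0>0. \<forall>x\<in>cball 0 L. \<forall>t>t0. psd (hess (\<lambda>y. steklov f y t) x))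
      \<longleftrightarrow> (\<exists>t0>0. \<forall>x\<in>cball 0 L. \<forall>t>t0. psd (hess f x + (t\<^sup>2 / 6) *\<^sub>R C))"
    by (auto simp: hess_steklov)
  have sufficient: "\<exists>t0>0. \<forall>x\<in>cball 0 L. \<forall>t>t0. psd (hess f x + (t\<^sup>2 / 6) *\<^sub>R C)"
    if "\<And>x z. x \<in> cball 0 L \<Longrightarrow> z \<in> null_space C \<Longrightarrow> z \<noteq> 0 \<Longrightarrow> 0 < z \<bullet> (hess f x *v z)"
    by (rule eventually_psd_add_scaled[OF compact_cball continuous_on_hess[OF f] that])
  have necessary: "0 \<le> z \<bullet> (hess f x *v z)"
    if "\<exists>t0>0. \<forall>x\<in>cball 0 L. \<forall>t>t0. psd (hess f x + (t\<^sup>2 / 6) *\<^sub>R C)"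
      and "x \<in> cball 0 L" "z \<in> null_space C" for x z
    using that by (intro nonneg_on_null_space_if_eventually_psd) blast+
  show ?thesis
    unfolding Let_def r_def[symmetric] convex_iff
  proof (intro conjI impI)
    show "\<exists>t0>0. \<forall>x\<in>cball 0 L. \<forall>t>t0. psd (hess f x + (t\<^sup>2 / 6) *\<^sub>R C)"
      if "0 < lam (CARD('n))"
      using null_space_eq_0[OF that] by (intro sufficient) auto
  qed (use nonneg_on_sphere_if_nonneg_on_null_space[OF necessary] in
      \<open>auto intro!: sufficient positive_on_null_space_if_positive_on_sphere\<close>)
qed

end
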